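(* Let $X\sim \mathcal{UNB}(r,p)$, i.e. $X$ has probability mass function $p(x)=\frac{q^{x} p^r}{1+x} \binom{r+x-1}{x} {}_2F_1(1, r+x; 2+x; q)$ for $x=0,1,2,\dots$. Then the cumulative distribution function of $X$ is \[ F_X(x)= F_Y(x)+ \frac{r+x}{x+2}\binom{r+x-1}{x} p^r q^{x+1}\, {}_2F_1\left(1,r+x+1;x+3;q\right), \] where $F_Y$ is the cumulative distribution function of $Y\sim \mathcal{NB}(r,p)$.
   Context: Parameters $r>0$, $0<p<1$, $q=1-p$. The Uniform-negative binomial distribution $\mathcal{UNB}(r,p)$ is defined by the stochastic representation $X\mid N\sim$ discrete uniform on $\{0,1,\dots,N\}$ and $N\sim \mathcal{NB}(r,p)$, the negative binomial distribution with probability mass function $P(N=n)=\binom{r+n-1}{n}p^r q^n$, $n=0,1,2,\dots$. The Gauss hypergeometric function is ${}_2F_1(a,b;c;z)=\sum_{n=0}^\infty \frac{(a)_n(b)_n}{(c)_n}\frac{z^n}{n!}$ for $|z|<1$, with $(a)_n$ the Pochhammer symbol (rising factorial). *)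

theory Defs
  imports Complex_Main
begin

definition hyp2F1 :: "real \<Rightarrow> real \<Rightarrow> real \<Rightarrow> real \<Rightarrow> real" where
  "hyp2F1 a b c z =
     (\<Sum>n. pochhammer a n * pochhammer b n / pochhammer c n * z ^ n / fact n)"

definition nb_pmf :: "real \<Rightarrow> real \<Rightarrow> nat \<Rightarrow> real" where
  "nb_pmf r p n = ((r + real n - 1) gchoose n) * p powr r * (1 - p) ^ n"

definition nb_cdf :: "real \<Rightarrow> real \<Rightarrow> nat \<Rightarrow> real" where
  "nb_cdf r p x = (\<Sum>k\<le>x. nb_pmf r p k)"

definition unb_pmf :: "real \<Rightarrow> real \<Rightarrow> nat \<Rightarrow> real" where
  "unb_pmf r p x = (1 - p) ^ x * p powr r / (1 + real x) * ((r + real x - 1) gchoose x)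
                   * hyp2F1 1 (r + real x) (2 + real x) (1 - p)"

definition unb_cdf :: "real \<Rightarrow> real \<Rightarrow> nat \<Rightarrow> real" where
  "unb_cdf r p x = (\<Sum>k\<le>x. unb_pmf r p k)"

end

theory Submission
  imports Defs "HOL-Real_Asymp.Real_Asymp"
begin

text \<open>
  Since \<open>(1)\<^sub>n = n!\<close>, the series \<open>\<^sub>2F\<^sub>1(1, b; c; z)\<close> is \<open>\<Sum> (b)\<^sub>n / (c)\<^sub>n z\<^sup>n\<close>, and splitting off
  its first term gives the contiguous relation
  \<open>\<^sub>2F\<^sub>1(1, b; c; z) = 1 + b z / c \<cdot> \<^sub>2F\<^sub>1(1, b + 1; c + 1; z)\<close>.
  Applied to the pmf of \<open>UNB(r, p)\<close>, which is \<open>NB(r, p)(x) / (x + 1) \<cdot> \<^sub>2F\<^sub>1(1, r + x; x + 2; q)\<close>,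
  it yields \<open>P(X = x) = P(N = x) / (x + 1) + P(X = x + 1)\<close>. Summing this telescopes to
  \<open>F\<^sub>X(x) = F\<^sub>N(x) + (x + 1) P(X = x + 1)\<close>, and one more use of the absorption identity
  for binomial coefficients puts the last term into the stated form.
\<close>

lemma hyp2F1_1_eq_suminf:
  "hyp2F1 1 b c z = (\<Sum>n. pochhammer b n / pochhammer c n * z ^ n)"
  unfolding hyp2F1_def by (simp add: pochhammer_fact[symmetric])

lemma pochhammer_ratio_term_Suc:
  fixes b c z :: real
  shows "pochhammer b (Suc n) / pochhammer c (Suc n) * z ^ Suc n
           = (b + real n) / (c + real n) * z * (pochhammer b n / pochhammer c n * z ^ n)"
  by (simp add: pochhammer_rec' mult_ac)

lemma summable_pochhammer_ratio_series:
  fixes b c z :: real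
  assumes "c > 0" and "\<bar>z\<bar> < 1"
  shows "summable (\<lambda>n. pochhammer b n / pochhammer c n * z ^ n)"
proof -
  define t where "t n = pochhammer b n / pochhammer c n * z ^ n" for n
  have lim: "(\<lambda>n. \<bar>b + real n\<bar> / (c + real n) * \<bar>z\<bar>) \<longlonglongrightarrow> 1 * \<bar>z\<bar>"
    by (intro tendsto_mult tendsto_const) real_asymp
  have "1 * \<bar>z\<bar> < (1 + \<bar>z\<bar>) / 2"
    using assms by simp
  from order_tendstoD(2)[OF lim this]
  obtain N where N: "\<And>n. n \<ge> N \<Longrightarrow> \<bar>b + real n\<bar> / (c + real n) * \<bar>z\<bar> < (1 + \<bar>z\<bar>) / 2"
    unfolding eventually_sequentially by blast
  have "summable t"
  proof (rule summable_ratio_test[of "(1 + \<bar>z\<bar>) / 2" N])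
    fix n
    assume "N \<le> n"
    have step: "t (Suc n) = (b + real n) / (c + real n) * z * t n"
      unfolding t_def by (rule pochhammer_ratio_term_Suc)
    have "norm (t (Suc n)) = \<bar>b + real n\<bar> / (c + real n) * \<bar>z\<bar> * norm (t n)"
      using \<open>c > 0\<close> unfolding step real_norm_def abs_mult abs_divide by simp
    also have "\<dots> \<le> (1 + \<bar>z\<bar>) / 2 * norm (t n)"
      using N[OF \<open>N \<le> n\<close>] by (intro mult_right_mono) auto
    finally show "norm (t (Suc n)) \<le> (1 + \<bar>z\<bar>) / 2 * norm (t n)" .
  qed (use assms in simp)
  then show ?thesis
    unfolding t_def .
qed

lemma hyp2F1_1_contiguous:
  fixes b c z :: real
  assumes "c > 0" and "\<bar>z\<bar> < 1"
  shows "hyp2F1 1 b c z = 1 + b / c * z * hyp2F1 1 (b + 1) (c + 1) z"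
proof -
  define t where "t b c n = pochhammer b n / pochhammer c n * z ^ n" for b c n
  have "(\<Sum>n. t b c n) = t b c 0 + (\<Sum>n. t b c (Suc n))"
    using suminf_split_head[OF summable_pochhammer_ratio_series[OF assms]]
    by (simp add: t_def)
  also have "(\<Sum>n. t b c (Suc n)) = (\<Sum>n. b / c * z * t (b + 1) (c + 1) n)"
    by (simp add: t_def pochhammer_rec mult_ac)
  also have "\<dots> = b / c * z * (\<Sum>n. t (b + 1) (c + 1) n)"
    unfolding t_def using assms
    by (intro suminf_mult summable_pochhammer_ratio_series) auto
  finally show ?thesis
    by (simp add: hyp2F1_1_eq_suminf t_def)
qed

lemma nb_pmf_Suc:
  "nb_pmf r p (Suc m) = (r + real m) / (real m + 1) * (1 - p) * nb_pmf r p m"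
proof -
  have "(r + real (Suc m) - 1) gchoose Suc m = (r + real m) / (real m + 1) * ((r + real m - 1) gchoose m)"
    using gbinomial_absorption[of m "r + real m"] by (simp add: field_simps add_ac)
  then show ?thesis
    by (simp add: nb_pmf_def)
qed

lemma unb_pmf_eq_nb_pmf:
  "unb_pmf r p m = nb_pmf r p m / (real m + 1) * hyp2F1 1 (r + real m) (real m + 2) (1 - p)"
  by (simp add: unb_pmf_def nb_pmf_def add_ac)

lemma unb_pmf_recurrence:
  assumes "\<bar>1 - p\<bar> < 1"
  shows "unb_pmf r p m = nb_pmf r p m / (real m + 1) + unb_pmf r p (Suc m)"
proof -
  define H where "H = hyp2F1 1 (r + real m + 1) (real m + 3) (1 - p)"
  have "hyp2F1 1 (r + real m) (real m + 2) (1 - p) = 1 + (r + real m) / (real m + 2) * (1 - p) * H"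
    using hyp2F1_1_contiguous[of "real m + 2" "1 - p" "r + real m"] assms
    by (simp add: H_def add_ac)
  then have "unb_pmf r p m
      = nb_pmf r p m / (real m + 1) + nb_pmf r p m / (real m + 1) * ((r + real m) / (real m + 2) * (1 - p) * H)"
    by (simp add: unb_pmf_eq_nb_pmf distrib_left)
  also have "nb_pmf r p m / (real m + 1) * ((r + real m) / (real m + 2) * (1 - p) * H) = unb_pmf r p (Suc m)"
    by (simp add: unb_pmf_eq_nb_pmf nb_pmf_Suc H_def add_ac mult_ac)
  finally show ?thesis .
qed

lemma unb_cdf_eq_nb_cdf_plus:
  assumes "\<bar>1 - p\<bar> < 1"
  shows "unb_cdf r p x = nb_cdf r p x + (real x + 1) * unb_pmf r p (Suc x)"
proof (induction x)
  case 0
  show ?case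
    using unb_pmf_recurrence[OF assms, of r 0] by (simp add: unb_cdf_def nb_cdf_def)
next
  case (Suc x)
  have "unb_cdf r p (Suc x) = nb_cdf r p x + (real x + 2) * unb_pmf r p (Suc x)"
    using Suc by (simp add: unb_cdf_def algebra_simps)
  also have "\<dots> = nb_cdf r p x + nb_pmf r p (Suc x) + (real x + 2) * unb_pmf r p (Suc (Suc x))"
    using unb_pmf_recurrence[OF assms, of r "Suc x"] by (simp add: field_simps)
  finally show ?case
    by (simp add: nb_cdf_def add_ac)
qed

theorem theorem3:
  fixes r p :: real and x :: nat
  assumes "r > 0" and "0 < p" and "p < 1"
  shows "unb_cdf r p x =
           nb_cdf r p x
           + (r + real x) / (real x + 2) * ((r + real x - 1) gchoose x) * p powr r * (1 - p) ^ (x + 1)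
             * hyp2F1 1 (r + real x + 1) (real x + 3) (1 - p)"
proof -
  have "\<bar>1 - p\<bar> < 1"
    using assms by simp
  then have "unb_cdf r p x = nb_cdf r p x + (real x + 1) * unb_pmf r p (Suc x)"
    by (rule unb_cdf_eq_nb_cdf_plus)
  also have "(real x + 1) * unb_pmf r p (Suc x)
      = (r + real x) / (real x + 2) * (1 - p) * nb_pmf r p x * hyp2F1 1 (r + real x + 1) (real x + 3) (1 - p)"
    by (simp add: unb_pmf_eq_nb_pmf nb_pmf_Suc add_ac)
  finally show ?thesis
    by (simp add: nb_pmf_def mult_ac)
qed

end
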